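(* There are no $1$-oriented and no $2$-oriented Spherical Diagrams.
   Context: A geodesic arc on the unit sphere in $\mathbb R^3$ is the unique shortest curve joining two non-antipodal points. An arc $a$ blocks an arc $b$ (equivalently, $b$ hits $a$) if an endpoint of $b$ lies in the relative interior of $a$. A Spherical Diagram (SD) is a finite non-empty collection $\mathcal D$ of pairwise interior-disjoint geodesic arcs on the unit sphere such that each arc of $\mathcal D$ is blocked by arcs of $\mathcal D$ at each of its endpoints. An SD $\mathcal D$ is $k$-oriented if there exist a set $P$ of $k$ points on the unit sphere (poles), no two antipodal, and a function $f\colon\mathcal D\to P$ such that each arc $a\in\mathcal D$ lies on a great circle through $f(a)$ but contains neither $f(a)$ nor its antipode $-f(a)$. *)

theory Defs
  imports "HOL-Analysis.Analysis"
begin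

type_synonym point = "real^3"

text \<open>A geodesic arc is represented by the ordered pair of its endpoints, which must be
distinct, non-antipodal unit vectors.\<close>

type_synonym arc = "point \<times> point"

definition valid_arc :: "arc \<Rightarrow> bool" where
  "valid_arc a \<longleftrightarrow> norm (fst a) = 1 \<and> norm (snd a) = 1 \<and> fst a \<noteq> snd a \<and> fst a \<noteq> - snd a"

definition arc_points :: "arc \<Rightarrow> point set" where
  "arc_points a = {(1 / norm ((1 - t) *\<^sub>R fst a + t *\<^sub>R snd a)) *\<^sub>R ((1 - t) *\<^sub>R fst a + t *\<^sub>R snd a)
                   | t. 0 \<le> t \<and> t \<le> 1}"

definition arc_interior :: "arc \<Rightarrow> point set" where
  "arc_interior a = {(1 / norm ((1 - t) *\<^sub>R fst a + t *\<^sub>R snd a)) *\<^sub>R ((1 - t) *\<^sub>R fst a + t *\<^sub>R snd a)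
                   | t. 0 < t \<and> t < 1}"

definition blocks :: "arc \<Rightarrow> arc \<Rightarrow> bool" where
  "blocks a b \<longleftrightarrow> fst b \<in> arc_interior a \<or> snd b \<in> arc_interior a"

definition spherical_diagram :: "arc set \<Rightarrow> bool" where
  "spherical_diagram D \<longleftrightarrow>
     finite D \<and> D \<noteq> {} \<and>
     (\<forall>a\<in>D. valid_arc a) \<and>
     (\<forall>a\<in>D. \<forall>b\<in>D. a \<noteq> b \<longrightarrow> arc_interior a \<inter> arc_interior b = {}) \<and>
     (\<forall>b\<in>D. (\<exists>a\<in>D. fst b \<in> arc_interior a) \<and> (\<exists>a\<in>D. snd b \<in> arc_interior a))"

definition great_circle :: "point set \<Rightarrow> bool" where
  "great_circle C \<longleftrightarrow> (\<exists>n. n \<noteq> 0 \<and> C = {x. norm x = 1 \<and> n \<bullet> x = 0})"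

definition k_oriented :: "nat \<Rightarrow> arc set \<Rightarrow> bool" where
  "k_oriented k D \<longleftrightarrow>
     (\<exists>P f. finite P \<and> card P = k \<and> (\<forall>p\<in>P. norm p = 1) \<and> (\<forall>p\<in>P. \<forall>q\<in>P. p \<noteq> - q) \<and>
        (\<forall>a\<in>D. f a \<in> P \<and>
           (\<exists>C. great_circle C \<and> arc_points a \<subseteq> C \<and> f a \<in> C) \<and>
           f a \<notin> arc_points a \<and> - f a \<notin> arc_points a))"

end

theory Submission
  imports Defs
begin

text \<open>
  With at most two poles, all poles lie on one great circle \<open>n \<bullet> x = 0\<close> and off another one
  \<open>l \<bullet> x = 0\<close> (take \<open>l = p + q\<close>). The pole of an arc with endpoints \<open>u, v\<close> is
  \<open>\<alpha> u + \<beta> v\<close> with \<open>\<alpha> \<beta> < 0\<close>, so each arc either lies on the great circle \<open>n \<bullet> x = 0\<close>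
  or inside one of its open hemispheres. Arcs on that great circle cannot block each other
  without overlapping. On the other arcs the ratio \<open>(l \<bullet> x) / (n \<bullet> x)\<close> is not constant,
  and at an interior point it lies strictly between its values at the two endpoints; hence an
  endpoint minimising the ratio cannot be blocked.
\<close>

definition arc_pole :: "point \<Rightarrow> arc \<Rightarrow> bool" where
  "arc_pole c a \<longleftrightarrow> norm c = 1 \<and> (\<exists>C. great_circle C \<and> arc_points a \<subseteq> C \<and> c \<in> C) \<and>
     c \<notin> arc_points a \<and> - c \<notin> arc_points a"

lemma valid_arc_lincomb_eq_0:
  assumes "valid_arc (u, v)"
  shows "\<alpha> *\<^sub>R u + \<beta> *\<^sub>R v = 0 \<longleftrightarrow> \<alpha> = 0 \<and> \<beta> = 0"
proof
  assume 0: "\<alpha> *\<^sub>R u + \<beta> *\<^sub>R v = 0"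
  have "\<alpha> = 0"
  proof (rule ccontr)
    assume "\<alpha> \<noteq> 0"
    have "\<alpha> *\<^sub>R u = (- \<beta>) *\<^sub>R v"
      using 0 by (simp add: eq_neg_iff_add_eq_0)
    then have "inverse \<alpha> *\<^sub>R (\<alpha> *\<^sub>R u) = inverse \<alpha> *\<^sub>R ((- \<beta>) *\<^sub>R v)" by simp
    then have u: "u = (- \<beta> / \<alpha>) *\<^sub>R v"
      using \<open>\<alpha> \<noteq> 0\<close> by (simp add: divide_inverse mult.commute)
    then have "\<bar>- \<beta> / \<alpha>\<bar> = 1"
      using assms by (metis norm_scaleR mult.right_neutral valid_arc_def fst_conv snd_conv)
    then have "- \<beta> / \<alpha> = 1 \<or> - \<beta> / \<alpha> = -1" by linarith
    then show False
      using u assms by (auto simp: valid_arc_def)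
  qed
  then show "\<alpha> = 0 \<and> \<beta> = 0"
    using 0 assms by (auto simp: valid_arc_def)
qed simp

lemma valid_arc_independent:
  assumes "valid_arc (u, v)"
  shows "independent {u, v}"
proof -
  have "u \<notin> span {v}"
  proof
    assume "u \<in> span {v}"
    then obtain k where "u = k *\<^sub>R v" by (auto simp: span_singleton)
    then have "1 *\<^sub>R u + (- k) *\<^sub>R v = 0" by simp
    then show False using valid_arc_lincomb_eq_0[OF assms, of 1 "- k"] by simp
  qed
  moreover have "v \<noteq> 0" "u \<noteq> v" using assms by (auto simp: valid_arc_def)
  ultimately show ?thesis by (simp add: independent_insert)
qed

lemma hyperplane_spanned_by_arc:
  assumes "valid_arc (u, v)" "m \<noteq> 0" "m \<bullet> u = 0" "m \<bullet> v = 0" "m \<bullet> z = 0"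
  obtains \<alpha> \<beta> where "z = \<alpha> *\<^sub>R u + \<beta> *\<^sub>R v"
proof -
  have "card {u, v} = 2"
    using assms(1) by (simp add: valid_arc_def)
  also have "2 = dim {x. m \<bullet> x = 0}"
    using dim_hyperplane[OF assms(2)] by simp
  finally have "{x. m \<bullet> x = 0} \<subseteq> span {u, v}"
    using card_eq_dim[of "{u, v}" "{x. m \<bullet> x = 0}"] valid_arc_independent[OF assms(1)] assms(3,4)
    by simp
  then have "z \<in> span {u, v}" using assms(5) by blast
  then obtain \<alpha> where "z - \<alpha> *\<^sub>R u \<in> span {v}" by (auto simp: span_insert)
  then obtain \<beta> where "z - \<alpha> *\<^sub>R u = \<beta> *\<^sub>R v" by (auto simp: span_singleton)
  then show ?thesis using that by (simp add: algebra_simps)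
qed

lemma normalized_arc_param_eq_cone:
  assumes "\<rho> \<ge> 0" "\<sigma> \<ge> 0" "\<rho> + \<sigma> > 0"
  defines "t \<equiv> \<sigma> / (\<rho> + \<sigma>)"
  shows "(1 / norm ((1 - t) *\<^sub>R u + t *\<^sub>R v)) *\<^sub>R ((1 - t) *\<^sub>R u + t *\<^sub>R v)
       = (1 / norm (\<rho> *\<^sub>R u + \<sigma> *\<^sub>R v)) *\<^sub>R (\<rho> *\<^sub>R u + \<sigma> *\<^sub>R v)"
proof -
  have "1 - t = \<rho> / (\<rho> + \<sigma>)"
    using assms by (simp add: field_simps)
  then have "(1 - t) *\<^sub>R u + t *\<^sub>R v = (1 / (\<rho> + \<sigma>)) *\<^sub>R (\<rho> *\<^sub>R u + \<sigma> *\<^sub>R v)"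
    by (simp add: t_def scaleR_add_right divide_inverse mult.commute)
  then show ?thesis
    using assms(3) by simp
qed

lemma cone_in_arc_points:
  assumes "\<rho> \<ge> 0" "\<sigma> \<ge> 0" "norm (\<rho> *\<^sub>R u + \<sigma> *\<^sub>R v) = 1"
  shows "\<rho> *\<^sub>R u + \<sigma> *\<^sub>R v \<in> arc_points (u, v)"
proof -
  have "\<rho> + \<sigma> > 0"
    using assms by (cases "\<rho> = 0 \<and> \<sigma> = 0") auto
  then show ?thesis
    using normalized_arc_param_eq_cone[of \<rho> \<sigma> u v] assms
    unfolding arc_points_def by (auto intro!: exI[of _ "\<sigma> / (\<rho> + \<sigma>)"])
qed

lemma normalized_cone_in_arc_interior:
  assumes "\<rho> > 0" "\<sigma> > 0"
  shows "(1 / norm (\<rho> *\<^sub>R u + \<sigma> *\<^sub>R v)) *\<^sub>R (\<rho> *\<^sub>R u + \<sigma> *\<^sub>R v) \<in> arc_interior (u, v)"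
  using normalized_arc_param_eq_cone[of \<rho> \<sigma> u v] assms
  unfolding arc_interior_def by (auto intro!: exI[of _ "\<sigma> / (\<rho> + \<sigma>)"])

lemma arc_interior_imp_cone:
  assumes "valid_arc (u, v)" "x \<in> arc_interior (u, v)"
  obtains \<rho> \<sigma> where "\<rho> > 0" "\<sigma> > 0" "x = \<rho> *\<^sub>R u + \<sigma> *\<^sub>R v"
proof -
  obtain t where t: "0 < t" "t < 1"
    and x: "x = (1 / norm ((1 - t) *\<^sub>R u + t *\<^sub>R v)) *\<^sub>R ((1 - t) *\<^sub>R u + t *\<^sub>R v)"
    using assms(2) unfolding arc_interior_def by auto
  define r where "r = norm ((1 - t) *\<^sub>R u + t *\<^sub>R v)"
  have "r > 0"
    using valid_arc_lincomb_eq_0[OF assms(1), of "1 - t" t] t by (simp add: r_def)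
  moreover have "x = ((1 - t) / r) *\<^sub>R u + (t / r) *\<^sub>R v"
    unfolding x r_def[symmetric] by (simp add: scaleR_add_right divide_inverse mult.commute)
  ultimately show ?thesis
    using t that[of "(1 - t) / r" "t / r"] by simp
qed

lemma endpoints_in_arc_points:
  assumes "valid_arc (u, v)"
  shows "u \<in> arc_points (u, v)" "v \<in> arc_points (u, v)"
  using cone_in_arc_points[of 1 0 u v] cone_in_arc_points[of 0 1 u v] assms
  by (auto simp: valid_arc_def)

lemma fst_notin_arc_interior:
  assumes "valid_arc (u, v)"
  shows "u \<notin> arc_interior (u, v)"
proof
  assume "u \<in> arc_interior (u, v)"
  then obtain \<rho> \<sigma> where "\<sigma> > 0" "u = \<rho> *\<^sub>R u + \<sigma> *\<^sub>R v"
    using arc_interior_imp_cone[OF assms] by blast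
  then have "(\<rho> - 1) *\<^sub>R u + \<sigma> *\<^sub>R v = 0" "\<sigma> \<noteq> 0"
    by (simp_all add: algebra_simps)
  then show False
    using valid_arc_lincomb_eq_0[OF assms] by blast
qed

lemma arc_pole_lincomb:
  assumes "valid_arc (u, v)" "arc_pole c (u, v)"
  obtains \<alpha> \<beta> where "c = \<alpha> *\<^sub>R u + \<beta> *\<^sub>R v" "\<alpha> * \<beta> < 0"
proof -
  obtain m where "m \<noteq> 0" "m \<bullet> c = 0" and arc: "arc_points (u, v) \<subseteq> {x. m \<bullet> x = 0}"
    using assms(2) unfolding arc_pole_def great_circle_def by blast
  then have "m \<bullet> u = 0" "m \<bullet> v = 0"
    using endpoints_in_arc_points[OF assms(1)] by auto
  then obtain \<alpha> \<beta> where c: "c = \<alpha> *\<^sub>R u + \<beta> *\<^sub>R v"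
    using hyperplane_spanned_by_arc[OF assms(1) \<open>m \<noteq> 0\<close>] \<open>m \<bullet> c = 0\<close> by metis
  have "norm c = 1" "c \<notin> arc_points (u, v)" "- c \<notin> arc_points (u, v)"
    using assms(2) by (simp_all add: arc_pole_def)
  moreover have "- c = (- \<alpha>) *\<^sub>R u + (- \<beta>) *\<^sub>R v"
    using c by simp
  ultimately have "\<not> (\<alpha> \<ge> 0 \<and> \<beta> \<ge> 0)" "\<not> (- \<alpha> \<ge> 0 \<and> - \<beta> \<ge> 0)"
    using c cone_in_arc_points[of \<alpha> \<beta> u v] cone_in_arc_points[of "- \<alpha>" "- \<beta>" u v]
    by (metis norm_minus_cancel)+
  then have "\<alpha> * \<beta> < 0"
    by (auto simp: not_le mult_neg_pos mult_pos_neg)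
  then show ?thesis
    using that c by blast
qed

lemma opposite_weights_same_sign:
  fixes \<alpha> \<beta> x y :: real
  assumes "\<alpha> * x + \<beta> * y = 0" "\<alpha> * \<beta> < 0"
  shows "(x = 0 \<and> y = 0) \<or> x * y > 0"
proof -
  have \<alpha>x: "\<alpha> * x = - (\<beta> * y)"
    using assms(1) by linarith
  have "(\<alpha> * \<beta>) * (x * y) = (\<alpha> * x) * (\<beta> * y)"
    by (simp add: ac_simps)
  also have "\<dots> \<le> 0"
    unfolding \<alpha>x by simp
  finally have "x * y \<ge> 0"
    using assms(2) by (simp add: mult_le_0_iff)
  moreover have "x = 0 \<longleftrightarrow> y = 0"
    using \<alpha>x assms(2) by auto
  ultimately show ?thesis
    by (auto simp: less_le)
qed

lemma arc_in_plane_or_open_halfspace: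
  assumes "valid_arc (u, v)" "arc_pole c (u, v)" "n \<bullet> c = 0"
  shows "(n \<bullet> u = 0 \<and> n \<bullet> v = 0) \<or> (n \<bullet> u) * (n \<bullet> v) > 0"
proof -
  obtain \<alpha> \<beta> where c: "c = \<alpha> *\<^sub>R u + \<beta> *\<^sub>R v" and "\<alpha> * \<beta> < 0"
    using arc_pole_lincomb[OF assms(1,2)] .
  moreover have "\<alpha> * (n \<bullet> u) + \<beta> * (n \<bullet> v) = 0"
    using assms(3) by (simp add: c inner_add_right)
  ultimately show ?thesis
    using opposite_weights_same_sign by blast
qed

lemma arc_ratio_endpoints_distinct:
  assumes "valid_arc (u, v)" "arc_pole c (u, v)" "n \<bullet> c = 0" "l \<bullet> c \<noteq> 0"
    and "n \<bullet> u \<noteq> 0" "n \<bullet> v \<noteq> 0"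
  shows "(l \<bullet> u) / (n \<bullet> u) \<noteq> (l \<bullet> v) / (n \<bullet> v)"
proof
  define k where "k = (l \<bullet> u) / (n \<bullet> u)"
  assume "(l \<bullet> u) / (n \<bullet> u) = (l \<bullet> v) / (n \<bullet> v)"
  then have "l \<bullet> u = k * (n \<bullet> u)" "l \<bullet> v = k * (n \<bullet> v)"
    using assms(5,6) by (simp_all add: k_def field_simps)
  moreover obtain \<alpha> \<beta> where c: "c = \<alpha> *\<^sub>R u + \<beta> *\<^sub>R v"
    using arc_pole_lincomb[OF assms(1,2)] by metis
  ultimately have "l \<bullet> c = k * (n \<bullet> c)"
    by (simp add: inner_add_right algebra_simps)
  then show False
    using assms(3,4) by simp
qed

lemma mediant_gt_min:
  fixes a b A B \<rho> \<sigma> :: real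
  assumes "A * B > 0" "\<rho> > 0" "\<sigma> > 0" "a / A \<noteq> b / B"
  shows "min (a / A) (b / B) < (\<rho> * a + \<sigma> * b) / (\<rho> * A + \<sigma> * B)"
proof -
  have pos: "min (a / A) (b / B) < (\<rho> * a + \<sigma> * b) / (\<rho> * A + \<sigma> * B)"
    if "A > 0" "B > 0" "a / A \<noteq> b / B" for a b A B
  proof -
    define g where "g = min (a / A) (b / B)"
    have "g * A \<le> a" "g * B \<le> b"
      using that by (simp_all add: g_def flip: pos_le_divide_eq)
    moreover have "g * A \<noteq> a \<or> g * B \<noteq> b"
      using that by (auto simp: g_def min_def)
    ultimately have "\<rho> * (g * A) + \<sigma> * (g * B) < \<rho> * a + \<sigma> * b"
      using assms(2,3) by (smt (verit) mult_left_mono mult_strict_left_mono)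
    moreover have "\<rho> * A + \<sigma> * B > 0"
      using that assms(2,3) by (intro add_pos_pos mult_pos_pos)
    ultimately show ?thesis
      unfolding g_def[symmetric] by (simp add: pos_less_divide_eq algebra_simps)
  qed
  show ?thesis
  proof (cases "A > 0")
    case True
    then show ?thesis
      using pos assms by (simp add: zero_less_mult_iff)
  next
    case False
    then have "- A > 0" "- B > 0"
      using assms(1) by (auto simp: zero_less_mult_iff)
    moreover have "(\<rho> * - a + \<sigma> * - b) / (\<rho> * - A + \<sigma> * - B) = (\<rho> * a + \<sigma> * b) / (\<rho> * A + \<sigma> * B)"
      by (metis minus_divide_divide minus_add_distrib mult_minus_right)
    ultimately show ?thesis
      using pos[of "- A" "- B" "- a" "- b"] assms(4) by simp
  qed
qed

lemma arc_interior_ratio_gt_min: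
  assumes "valid_arc (u, v)" "arc_pole c (u, v)" "n \<bullet> c = 0" "l \<bullet> c \<noteq> 0"
    and "x \<in> arc_interior (u, v)" "n \<bullet> x \<noteq> 0"
  shows "(n \<bullet> u) * (n \<bullet> v) > 0"
    and "min ((l \<bullet> u) / (n \<bullet> u)) ((l \<bullet> v) / (n \<bullet> v)) < (l \<bullet> x) / (n \<bullet> x)"
proof -
  obtain \<rho> \<sigma> where "\<rho> > 0" "\<sigma> > 0" and x: "x = \<rho> *\<^sub>R u + \<sigma> *\<^sub>R v"
    using arc_interior_imp_cone[OF assms(1,5)] .
  have nx: "n \<bullet> x = \<rho> * (n \<bullet> u) + \<sigma> * (n \<bullet> v)" and lx: "l \<bullet> x = \<rho> * (l \<bullet> u) + \<sigma> * (l \<bullet> v)"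
    by (simp_all add: x inner_add_right)
  then show off: "(n \<bullet> u) * (n \<bullet> v) > 0"
    using arc_in_plane_or_open_halfspace[OF assms(1-3)] assms(6) by auto
  then show "min ((l \<bullet> u) / (n \<bullet> u)) ((l \<bullet> v) / (n \<bullet> v)) < (l \<bullet> x) / (n \<bullet> x)"
    unfolding nx lx
    using off by (intro mediant_gt_min arc_ratio_endpoints_distinct[OF assms(1-4)] \<open>\<rho> > 0\<close> \<open>\<sigma> > 0\<close>) auto
qed

lemma spherical_diagram_in_plane_of_poles:
  assumes "spherical_diagram D"
    and poles: "\<And>a. a \<in> D \<Longrightarrow> arc_pole (f a) a \<and> n \<bullet> f a = 0 \<and> l \<bullet> f a \<noteq> 0"
    and "a \<in> D"
  shows "n \<bullet> fst a = 0 \<and> n \<bullet> snd a = 0"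
proof (rule ccontr)
  define G where "G x = (l \<bullet> x) / (n \<bullet> x)" for x
  define Off where "Off = {b \<in> D. (n \<bullet> fst b) * (n \<bullet> snd b) > 0}"
  define E where "E = fst ` Off \<union> snd ` Off"
  from assms(1) have "finite D"
    and blocked: "\<And>b. b \<in> D \<Longrightarrow> (\<exists>a\<in>D. fst b \<in> arc_interior a) \<and> (\<exists>a\<in>D. snd b \<in> arc_interior a)"
    by (auto simp: spherical_diagram_def)
  have valid: "valid_arc (fst b, snd b)" and pole: "arc_pole (f b) (fst b, snd b)"
    and pole_in_plane: "n \<bullet> f b = 0" and pole_off_line: "l \<bullet> f b \<noteq> 0" if "b \<in> D" for b
    using assms(1) poles[OF that] that by (auto simp: spherical_diagram_def)
  note ratio = arc_interior_ratio_gt_min[OF valid pole pole_in_plane pole_off_line]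
  assume "\<not> (n \<bullet> fst a = 0 \<and> n \<bullet> snd a = 0)"
  then have "a \<in> Off"
    using arc_in_plane_or_open_halfspace[OF valid pole pole_in_plane, OF \<open>a \<in> D\<close> \<open>a \<in> D\<close> \<open>a \<in> D\<close>]
      \<open>a \<in> D\<close> by (auto simp: Off_def)
  then have "fst a \<in> E"
    by (simp add: E_def)
  moreover have "finite E"
    using \<open>finite D\<close> by (simp add: E_def Off_def)
  ultimately obtain x where "x \<in> E" and x_min: "\<And>y. y \<in> E \<Longrightarrow> \<not> G y < G x"
    using ex_is_arg_min_if_finite[of E G] by (auto simp: is_arg_min_def)
  then obtain a' where "a' \<in> Off" "x = fst a' \<or> x = snd a'"
    by (auto simp: E_def)
  then have "a' \<in> D" "n \<bullet> x \<noteq> 0"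
    by (auto simp: Off_def)
  then obtain b where "b \<in> D" "x \<in> arc_interior (fst b, snd b)" "n \<bullet> x \<noteq> 0"
    using blocked[OF \<open>a' \<in> D\<close>] \<open>x = fst a' \<or> x = snd a'\<close> by auto
  then have "b \<in> Off" and "min (G (fst b)) (G (snd b)) < G x"
    using ratio[of b x] by (auto simp: Off_def G_def)
  then show False
    using x_min[of "fst b"] x_min[of "snd b"] by (auto simp: E_def min_less_iff_disj)
qed

lemma small_perturbation_pos:
  fixes \<rho> \<sigma> \<alpha> \<beta> :: real
  assumes "\<rho> > 0" "\<sigma> > 0"
  obtains \<epsilon> where "\<epsilon> > 0" "\<rho> + \<epsilon> * \<alpha> > 0" "\<sigma> + \<epsilon> * \<beta> > 0"
proof
  define \<epsilon> where "\<epsilon> = min \<rho> \<sigma> / (\<bar>\<alpha>\<bar> + \<bar>\<beta>\<bar> + 1)"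
  show "\<epsilon> > 0"
    using assms by (simp add: \<epsilon>_def)
  have "\<bar>\<alpha>\<bar> + \<bar>\<beta>\<bar> + 1 > 0"
    by (simp add: add_nonneg_pos)
  then have "\<epsilon> * (\<bar>\<alpha>\<bar> + \<bar>\<beta>\<bar> + 1) = min \<rho> \<sigma>"
    by (simp add: \<epsilon>_def)
  then have "\<epsilon> * \<bar>\<alpha>\<bar> + \<epsilon> * \<bar>\<beta>\<bar> + \<epsilon> = min \<rho> \<sigma>"
    by (simp add: algebra_simps)
  moreover have "- (\<epsilon> * \<alpha>) \<le> \<epsilon> * \<bar>\<alpha>\<bar>" "- (\<epsilon> * \<beta>) \<le> \<epsilon> * \<bar>\<beta>\<bar>" "\<epsilon> * \<bar>\<alpha>\<bar> \<ge> 0" "\<epsilon> * \<bar>\<beta>\<bar> \<ge> 0"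
    using \<open>\<epsilon> > 0\<close> abs_ge_minus_self[of "\<epsilon> * \<alpha>"] abs_ge_minus_self[of "\<epsilon> * \<beta>"]
    by (simp_all add: abs_mult)
  moreover have "min \<rho> \<sigma> \<le> \<rho>" "min \<rho> \<sigma> \<le> \<sigma>"
    by simp_all
  ultimately show "\<rho> + \<epsilon> * \<alpha> > 0" "\<sigma> + \<epsilon> * \<beta> > 0"
    using \<open>\<epsilon> > 0\<close> by linarith+
qed

lemma coplanar_arcs_interiors_meet:
  assumes "valid_arc (u, v)" "valid_arc (u', v')" "u \<in> arc_interior (u', v')"
    and "n \<noteq> 0" "n \<bullet> u' = 0" "n \<bullet> v' = 0" "n \<bullet> v = 0"
  shows "arc_interior (u, v) \<inter> arc_interior (u', v') \<noteq> {}"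
proof -
  obtain \<rho> \<sigma> where "\<rho> > 0" "\<sigma> > 0" and u: "u = \<rho> *\<^sub>R u' + \<sigma> *\<^sub>R v'"
    using arc_interior_imp_cone[OF assms(2,3)] .
  obtain \<alpha> \<beta> where v: "v = \<alpha> *\<^sub>R u' + \<beta> *\<^sub>R v'"
    using hyperplane_spanned_by_arc[OF assms(2,4-7)] .
  obtain \<epsilon> where "\<epsilon> > 0" "\<rho> + \<epsilon> * \<alpha> > 0" "\<sigma> + \<epsilon> * \<beta> > 0"
    using small_perturbation_pos[OF \<open>\<rho> > 0\<close> \<open>\<sigma> > 0\<close>] .
  define w where "w = 1 *\<^sub>R u + \<epsilon> *\<^sub>R v"
  have "(1 / norm w) *\<^sub>R w \<in> arc_interior (u, v)"
    unfolding w_def using \<open>\<epsilon> > 0\<close> by (intro normalized_cone_in_arc_interior) simp_all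
  moreover have "w = (\<rho> + \<epsilon> * \<alpha>) *\<^sub>R u' + (\<sigma> + \<epsilon> * \<beta>) *\<^sub>R v'"
    unfolding w_def u v by (simp add: scaleR_add_right scaleR_add_left)
  then have "(1 / norm w) *\<^sub>R w \<in> arc_interior (u', v')"
    using \<open>\<rho> + \<epsilon> * \<alpha> > 0\<close> \<open>\<sigma> + \<epsilon> * \<beta> > 0\<close> by (simp only:) (rule normalized_cone_in_arc_interior)
  ultimately show ?thesis
    by blast
qed

lemma spherical_diagram_not_coplanar:
  assumes "spherical_diagram D" "n \<noteq> 0"
  shows "\<exists>a\<in>D. n \<bullet> fst a \<noteq> 0 \<or> n \<bullet> snd a \<noteq> 0"
proof (rule ccontr)
  assume "\<not> ?thesis"
  then have coplanar: "n \<bullet> fst a = 0" "n \<bullet> snd a = 0" if "a \<in> D" for a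
    using that by auto
  from assms(1) obtain a b where "a \<in> D" "b \<in> D" "fst a \<in> arc_interior b"
    unfolding spherical_diagram_def by fast
  moreover have valid: "valid_arc (fst c, snd c)" if "c \<in> D" for c
    using assms(1) that by (simp add: spherical_diagram_def)
  ultimately have "a \<noteq> b"
    using fst_notin_arc_interior by fastforce
  moreover have "arc_interior a \<inter> arc_interior b \<noteq> {}"
    using coplanar_arcs_interiors_meet[of "fst a" "snd a" "fst b" "snd b" n] valid coplanar
      \<open>a \<in> D\<close> \<open>b \<in> D\<close> \<open>fst a \<in> arc_interior b\<close> assms(2) by simp
  ultimately show False
    using assms(1) \<open>a \<in> D\<close> \<open>b \<in> D\<close> unfolding spherical_diagram_def by blast
qed

lemma no_spherical_diagram_with_poles_on_great_circle:
  assumes "spherical_diagram D" "n \<noteq> 0"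
    and "\<And>a. a \<in> D \<Longrightarrow> arc_pole (f a) a \<and> n \<bullet> f a = 0 \<and> l \<bullet> f a \<noteq> 0"
  shows False
  using spherical_diagram_not_coplanar[OF assms(1,2)] spherical_diagram_in_plane_of_poles[OF assms(1,3)]
  by blast

lemma unit_pair_on_great_circle:
  fixes p q :: point
  assumes "norm p = 1" "norm q = 1" "p \<noteq> - q"
  obtains n l where "n \<noteq> 0" "n \<bullet> p = 0" "n \<bullet> q = 0" "l \<bullet> p \<noteq> 0" "l \<bullet> q \<noteq> 0"
proof -
  have "card {p, q} \<le> 2"
    by (cases "p = q") simp_all
  then have "dim {p, q} < DIM(point)"
    using dim_le_card'[of "{p, q}"] by simp
  then obtain n where "n \<noteq> 0" "span {p, q} \<subseteq> {x. n \<bullet> x = 0}"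
    using lowdim_subset_hyperplane by blast
  then have "n \<bullet> p = 0" "n \<bullet> q = 0"
    using span_base[of p "{p, q}"] span_base[of q "{p, q}"] by auto
  have pp: "p \<bullet> p = 1" and qq: "q \<bullet> q = 1"
    using assms(1,2) by (simp_all add: dot_square_norm)
  have "p + q \<noteq> 0"
    using assms(3) by (simp add: add_eq_0_iff2)
  then have "0 < (p + q) \<bullet> (p + q)" by simp
  also have "\<dots> = 2 + 2 * (p \<bullet> q)"
    using pp qq by (simp add: inner_add inner_commute)
  finally have "(p + q) \<bullet> p > 0" "(p + q) \<bullet> q > 0"
    using pp qq by (simp_all add: inner_add_left inner_add_right inner_commute)
  then show ?thesis
    using that[of n "p + q"] \<open>n \<noteq> 0\<close> \<open>n \<bullet> p = 0\<close> \<open>n \<bullet> q = 0\<close> by simp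
qed

theorem mainTheorem8:
  shows "\<forall>D. spherical_diagram D \<longrightarrow> \<not> k_oriented 1 D \<and> \<not> k_oriented 2 D"
proof -
  have "\<not> k_oriented k D" if "spherical_diagram D" "k = 1 \<or> k = 2" for D k
  proof
    assume "k_oriented k D"
    then obtain P f where "card P = k" and unit: "\<forall>p\<in>P. norm p = 1"
      and no_antipodes: "\<forall>p\<in>P. \<forall>q\<in>P. p \<noteq> - q"
      and poles: "\<forall>a\<in>D. f a \<in> P \<and> (\<exists>C. great_circle C \<and> arc_points a \<subseteq> C \<and> f a \<in> C) \<and>
                    f a \<notin> arc_points a \<and> - f a \<notin> arc_points a"
      unfolding k_oriented_def by blast
    obtain p q where P: "P = {p, q}"
      using \<open>card P = k\<close> \<open>k = 1 \<or> k = 2\<close> by (auto simp: card_1_singleton_iff card_2_iff)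
    then have "norm p = 1" "norm q = 1" "p \<noteq> - q"
      using unit no_antipodes by auto
    then obtain n l where "n \<noteq> 0" "n \<bullet> p = 0" "n \<bullet> q = 0" "l \<bullet> p \<noteq> 0" "l \<bullet> q \<noteq> 0"
      by (rule unit_pair_on_great_circle)
    moreover have "arc_pole (f a) a" "f a \<in> {p, q}" if "a \<in> D" for a
      using poles unit that unfolding P arc_pole_def by blast+
    ultimately show False
      using no_spherical_diagram_with_poles_on_great_circle[OF \<open>spherical_diagram D\<close>, of n f l] by blast
  qed
  then show ?thesis
    by blast
qed

end
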